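(* For $c\in\mathbb{R}$, $\Omega_0^M\cap\kappa^{-1}(c)\neq\varnothing$ if and only if $c<-14$.
   Context: $\kappa(x,y,z)=-x^2-y^2+z^2+xyz-2$ on $\mathbb{R}^3$, and $\Omega_0^M=\{(x,y,z)\in\mathbb{R}^3: z<-2,\ xy+z>2\}$ (equivalently $z<-2$ and $\bar z<-2$ where $\bar z=-xy-z$). *)

theory Defs
  imports Complex_Main
begin

definition kappa :: "real \<Rightarrow> real \<Rightarrow> real \<Rightarrow> real" where
  "kappa x y z = - (x^2) - y^2 + z^2 + x*y*z - 2"

definition Omega0M :: "(real \<times> real \<times> real) set" where
  "Omega0M = {(x, y, z). z < -2 \<and> x*y + z > 2}"

end

theory Submission
  imports Defs
begin

(* With zbar = -xy - z, kappa = -(x^2 + y^2) - z zbar - 2. On Omega0M both z and zbar are below -2,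
   so z zbar > 4 and xy = -(z + zbar) > 4, whence x^2 + y^2 >= 2xy > 8 and kappa < -14.
   Conversely, on the diagonal x = y = t, z = zbar = -t^2/2 one has kappa = 2 - (t^2/2 + 2)^2,
   which takes every value below -14 as t^2 ranges over (4, oo). *)

lemma kappa_eq_Vieta:
  "kappa x y z = - (x^2 + y^2) - z * (- x*y - z) - 2"
  unfolding kappa_def by (simp add: algebra_simps power2_eq_square)

lemma kappa_less_on_Omega0M:
  assumes "(x, y, z) \<in> Omega0M"
  shows "kappa x y z < -14"
proof -
  define zbar where "zbar = - x*y - z"
  have z: "z < -2" and zbar: "zbar < -2"
    using assms unfolding Omega0M_def zbar_def by auto
  have "2 * 2 < (-z) * (-zbar)"
    using z zbar by (intro mult_strict_mono) auto
  then have "z * zbar > 4" by simp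
  moreover have "x^2 + y^2 > 8"
  proof -
    have "x * y > 4" using z zbar unfolding zbar_def by simp
    moreover have "0 \<le> (x - y)^2" by simp
    ultimately show ?thesis by (simp add: power2_eq_square algebra_simps)
  qed
  ultimately show ?thesis
    unfolding kappa_eq_Vieta zbar_def[symmetric] by linarith
qed

lemma diagonal_in_Omega0M:
  assumes "t^2 > 4"
  shows "(t, t, - (t^2 / 2)) \<in> Omega0M"
  using assms unfolding Omega0M_def by (simp add: power2_eq_square)

lemma kappa_diagonal:
  "kappa t t (- (t^2 / 2)) = 2 - (t^2 / 2 + 2)^2"
  unfolding kappa_def by (simp add: power2_eq_square field_simps)

lemma kappa_attains_below_minus_14:
  assumes "c < -14"
  obtains t where "t^2 > 4" and "kappa t t (- (t^2 / 2)) = c"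
proof
  define r where "r = sqrt (2 - c)"
  define s where "s = 2 * r - 4"
  have "r^2 = 2 - c" and "r > 4"
    unfolding r_def using assms by (auto intro: real_less_rsqrt)
  moreover have "s / 2 + 2 = r"
    unfolding s_def by (simp add: field_simps)
  ultimately have "s > 4" and "(s / 2 + 2)^2 = 2 - c"
    unfolding s_def by auto
  then show "(sqrt s)^2 > 4" and "kappa (sqrt s) (sqrt s) (- ((sqrt s)^2 / 2)) = c"
    unfolding kappa_diagonal by simp_all
qed

theorem mainTheorem3:
  fixes c :: real
  shows "Omega0M \<inter> {(x, y, z). kappa x y z = c} \<noteq> {} \<longleftrightarrow> c < -14"
proof
  assume "Omega0M \<inter> {(x, y, z). kappa x y z = c} \<noteq> {}"
  then obtain x y z where "(x, y, z) \<in> Omega0M" and "kappa x y z = c"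
    by auto
  then show "c < -14"
    using kappa_less_on_Omega0M by blast
next
  assume "c < -14"
  then obtain t where "t^2 > 4" and "kappa t t (- (t^2 / 2)) = c"
    by (rule kappa_attains_below_minus_14)
  then have "(t, t, - (t^2 / 2)) \<in> Omega0M \<inter> {(x, y, z). kappa x y z = c}"
    using diagonal_in_Omega0M by simp
  then show "Omega0M \<inter> {(x, y, z). kappa x y z = c} \<noteq> {}"
    by blast
qed

end
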